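(* Let $S_0>0$, $\nu>0$, $J>0$, and let $v_n\ge 0$ ($n\in\mathbb{N}$) with $\sum_n v_n S_0^n<\infty$. Let $S:\mathbb{R}\to\mathbb{R}$ be an equilibrium correlation function that solves, for $t\ge 0$, the mode-coupling equations $$J^{-1}\ddot S(t)+\nu\dot S(t)+S_0^{-1}S(t)+\int_0^t M(t-t')\dot S(t')\,\mathrm{d}t'=0,\qquad M(t)=\sum_{n\in\mathbb{N}}v_nS(t)^n,$$ with $S(0)=S_0$, $\dot S(0)=0$, and such that $M$ is also an equilibrium correlation function. Then $\lim_{t\to\infty}S(t)$ exists.
   Context: An equilibrium correlation function is a function of the form $t\mapsto\int_{\mathbb{R}}e^{-i\omega t}\rho(\mathrm{d}\omega)$ with $\rho$ a finite symmetric Borel measure on $\mathbb{R}$. *)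

theory Defs
  imports "HOL-Analysis.Analysis"
begin

definition eq_corr :: "(real \<Rightarrow> real) \<Rightarrow> bool" where
  "eq_corr f \<longleftrightarrow>
     (\<exists>\<rho> :: real measure.
        sets \<rho> = sets borel \<and> finite_measure \<rho> \<and>
        (\<forall>A \<in> sets borel. emeasure \<rho> (uminus ` A) = emeasure \<rho> A) \<and>
        (\<forall>t. complex_of_real (f t) = integral\<^sup>L \<rho> (\<lambda>\<omega>. cis (- (\<omega> * t)))))"

end

theory Submission
  imports Defs
begin

(* Write S and M as cosine transforms of finite spectral measures rho and sigma.
   (1) Energy estimate.  Because sigma is a positive measure, the memory term admits a
       nonnegative energy (memory_energy) whose derivative along the solution is S' times
       the memory convolution.  Multiplying the equation by S' then yields a conserved
       energy, and nu * (integral of S'^2 over [0, T]) <= S0/2 for all T.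
   (2) Finite dissipation implies that S is slowly oscillating: on windows [t, t + h],
       t large, S varies arbitrarily little.
   (3) Tauberian step.  The averages of a cosine transform over long windows tend to the
       atom rho {0} of its spectral measure; for a slowly oscillating transform the value
       at t is close to the average over [t, t + h], hence S(t) tends to rho {0}.
   Only the positivity of the memory kernel's spectral measure enters the argument. *)


definition spectral_measure :: "real measure \<Rightarrow> (real \<Rightarrow> real) \<Rightarrow> bool" where
  "spectral_measure \<rho> f \<longleftrightarrow>
     sets \<rho> = sets borel \<and> finite_measure \<rho> \<and> (\<forall>t. f t = (\<integral>\<omega>. cos (\<omega> * t) \<partial>\<rho>))"

(* The real part of the Fourier representation of an equilibrium correlation function
   is a cosine transform. *)
lemma eq_corr_imp_spectral_measure:
  assumes "eq_corr f"
  obtains \<rho> where "spectral_measure \<rho> f"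
proof -
  from assms obtain \<rho> :: "real measure" where \<rho>: "sets \<rho> = sets borel" "finite_measure \<rho>"
    and f: "\<And>t. complex_of_real (f t) = (\<integral>\<omega>. cis (- (\<omega> * t)) \<partial>\<rho>)"
    unfolding eq_corr_def by blast
  have "integrable \<rho> (\<lambda>\<omega>. cis (- (\<omega> * t)))" for t
  proof (rule finite_measure.integrable_const_bound[OF \<rho>(2), where B=1])
    show "(\<lambda>\<omega>. cis (- (\<omega> * t))) \<in> borel_measurable \<rho>"
      unfolding measurable_cong_sets[OF \<rho>(1) refl]
      by (intro borel_measurable_continuous_onI continuous_intros)
  qed simp
  then have "f t = (\<integral>\<omega>. cos (\<omega> * t) \<partial>\<rho>)" for t
    using arg_cong[OF f[of t], of Re] integral_Re[of \<rho> "\<lambda>\<omega>. cis (- (\<omega> * t))"] by simp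
  with \<rho> show ?thesis
    by (intro that[of \<rho>]) (simp add: spectral_measure_def)
qed

lemma spectral_measure_space:
  assumes "spectral_measure \<rho> f"
  shows "space \<rho> = UNIV"
  using assms sets_eq_imp_space_eq[of \<rho> borel] by (simp add: spectral_measure_def)

lemma spectral_measure_borel_measurable:
  assumes "spectral_measure \<rho> f" "g \<in> borel_measurable borel"
  shows "g \<in> borel_measurable \<rho>"
  using assms measurable_cong_sets[of \<rho> borel borel borel] by (auto simp: spectral_measure_def)

lemma spectral_measure_continuous_measurable:
  fixes g :: "real \<Rightarrow> real"
  assumes "spectral_measure \<rho> f" "continuous_on UNIV g"
  shows "g \<in> borel_measurable \<rho>"
  using spectral_measure_borel_measurable[OF assms(1) borel_measurable_continuous_onI[OF assms(2)]] .

lemma abs_le_one_mult: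
  fixes c x :: real
  assumes "\<bar>c\<bar> \<le> 1" "\<bar>x\<bar> \<le> B"
  shows "\<bar>c * x\<bar> \<le> B"
  using mult_mono[OF assms] by (simp add: abs_mult)

lemma has_real_derivative_integral_param:
  fixes \<mu> :: "'a measure" and f f' :: "real \<Rightarrow> 'a \<Rightarrow> real"
  assumes fin: "finite_measure \<mu>"
    and int: "\<And>y. y \<in> {a..b} \<Longrightarrow> integrable \<mu> (f y)"
    and meas': "f' x \<in> borel_measurable \<mu>"
    and der: "\<And>y \<omega>. y \<in> {a..b} \<Longrightarrow> ((\<lambda>y. f y \<omega>) has_real_derivative f' y \<omega>) (at y within {a..b})"
    and bnd: "\<And>y \<omega>. y \<in> {a..b} \<Longrightarrow> \<bar>f' y \<omega>\<bar> \<le> B"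
    and x: "x \<in> {a..b}"
  shows "((\<lambda>y. \<integral>\<omega>. f y \<omega> \<partial>\<mu>) has_real_derivative (\<integral>\<omega>. f' x \<omega> \<partial>\<mu>)) (at x within {a..b})"
proof -
  interpret finite_measure \<mu> by (rule fin)
  have lipschitz: "\<bar>f y \<omega> - f x \<omega>\<bar> \<le> B * \<bar>y - x\<bar>" if "y \<in> {a..b}" for y \<omega>
    using field_differentiable_bound[of "{a..b}" "\<lambda>x. f x \<omega>" "\<lambda>y. f' y \<omega>" B y x] der bnd that x
    by auto
  show ?thesis
    unfolding has_field_derivative_iff tendsto_at_iff_sequentially
  proof (intro allI impI)
    fix X :: "nat \<Rightarrow> real"
    assume X: "\<forall>i. X i \<in> {a..b} - {x}" "X \<longlonglongrightarrow> x"
    have quotient: "((\<lambda>y. ((\<integral>\<omega>. f y \<omega> \<partial>\<mu>) - (\<integral>\<omega>. f x \<omega> \<partial>\<mu>)) / (y - x)) \<circ> X) i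
        = (\<integral>\<omega>. (f (X i) \<omega> - f x \<omega>) / (X i - x) \<partial>\<mu>)" for i
      using X int x by (simp add: integral_diff)
    have "(\<lambda>i. \<integral>\<omega>. (f (X i) \<omega> - f x \<omega>) / (X i - x) \<partial>\<mu>) \<longlonglongrightarrow> (\<integral>\<omega>. f' x \<omega> \<partial>\<mu>)"
    proof (rule integral_dominated_convergence[where w="\<lambda>_. B"])
      show "(\<lambda>\<omega>. (f (X i) \<omega> - f x \<omega>) / (X i - x)) \<in> borel_measurable \<mu>" for i
        using int[of "X i"] int[OF x] X by auto
      show "AE \<omega> in \<mu>. (\<lambda>i. (f (X i) \<omega> - f x \<omega>) / (X i - x)) \<longlonglongrightarrow> f' x \<omega>"
      proof (intro AE_I2)
        fix \<omega>
        have "((\<lambda>y. (f y \<omega> - f x \<omega>) / (y - x)) \<longlongrightarrow> f' x \<omega>) (at x within {a..b})"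
          using der[OF x, of \<omega>] unfolding has_field_derivative_iff .
        then show "(\<lambda>i. (f (X i) \<omega> - f x \<omega>) / (X i - x)) \<longlonglongrightarrow> f' x \<omega>"
          unfolding tendsto_at_iff_sequentially comp_def using X by blast
      qed
      show "AE \<omega> in \<mu>. norm ((f (X i) \<omega> - f x \<omega>) / (X i - x)) \<le> B" for i
        using lipschitz[of "X i"] X by (intro AE_I2) (simp add: divide_le_eq abs_divide)
    qed (use meas' in simp_all)
    then show "((\<lambda>y. ((\<integral>\<omega>. f y \<omega> \<partial>\<mu>) - (\<integral>\<omega>. f x \<omega> \<partial>\<mu>)) / (y - x)) \<circ> X)
        \<longlonglongrightarrow> (\<integral>\<omega>. f' x \<omega> \<partial>\<mu>)"
      unfolding quotient .
  qed
qed

lemma isCont_integral_param: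
  fixes \<mu> :: "'a measure" and f :: "real \<Rightarrow> 'a \<Rightarrow> real"
  assumes fin: "finite_measure \<mu>"
    and meas: "\<And>x. f x \<in> borel_measurable \<mu>"
    and cont: "\<And>\<omega>. isCont (\<lambda>x. f x \<omega>) x0"
    and bnd: "\<And>y \<omega>. \<bar>f y \<omega>\<bar> \<le> B"
  shows "isCont (\<lambda>x. \<integral>\<omega>. f x \<omega> \<partial>\<mu>) x0"
  unfolding isCont_def tendsto_at_iff_sequentially
proof (intro allI impI)
  interpret finite_measure \<mu> by (rule fin)
  fix X :: "nat \<Rightarrow> real"
  assume X: "\<forall>i. X i \<in> UNIV - {x0}" "X \<longlonglongrightarrow> x0"
  have "(\<lambda>i. \<integral>\<omega>. f (X i) \<omega> \<partial>\<mu>) \<longlonglongrightarrow> (\<integral>\<omega>. f x0 \<omega> \<partial>\<mu>)"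
  proof (rule integral_dominated_convergence[where w="\<lambda>_. B"])
    show "AE \<omega> in \<mu>. (\<lambda>i. f (X i) \<omega>) \<longlonglongrightarrow> f x0 \<omega>"
      using isCont_tendsto_compose[OF cont X(2)] by (intro AE_I2) auto
  qed (use meas bnd in auto)
  then show "((\<lambda>x. \<integral>\<omega>. f x \<omega> \<partial>\<mu>) \<circ> X) \<longlonglongrightarrow> (\<integral>\<omega>. f x0 \<omega> \<partial>\<mu>)"
    by (simp add: comp_def)
qed

lemma has_real_derivative_nonneg_imp_le:
  fixes f f' :: "real \<Rightarrow> real"
  assumes ab: "a \<le> b"
    and der: "\<And>z. z \<in> {a..b} \<Longrightarrow> (f has_real_derivative f' z) (at z within {a..b})"
    and nonneg: "\<And>z. z \<in> {a..b} \<Longrightarrow> f' z \<ge> 0"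
  shows "f a \<le> f b"
proof (rule DERIV_nonneg_imp_increasing_open[OF ab])
  show "continuous_on {a..b} f"
    using der DERIV_continuous continuous_on_eq_continuous_within by blast
  fix x assume x: "a < x" "x < b"
  then have "(f has_real_derivative f' x) (at x)"
    using der[of x] at_within_Icc_at[OF x] by simp
  then show "\<exists>y. (f has_real_derivative y) (at x) \<and> 0 \<le> y" using nonneg[of x] x by auto
qed

lemma spectral_measure_continuous:
  assumes "spectral_measure \<rho> f"
  shows "continuous_on A f"
proof -
  have "isCont (\<lambda>t. \<integral>\<omega>. cos (\<omega> * t) \<partial>\<rho>) t" for t
    using assms unfolding spectral_measure_def
    by (intro isCont_integral_param[where B=1])
      (auto intro!: spectral_measure_continuous_measurable[OF assms] continuous_intros)
  then show ?thesis
    using assms by (simp add: spectral_measure_def continuous_at_imp_continuous_on)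
qed

definition partial_transform :: "(real \<Rightarrow> real) \<Rightarrow> (real \<Rightarrow> real) \<Rightarrow> real \<Rightarrow> real \<Rightarrow> real" where
  "partial_transform \<phi> g \<omega> u = integral {0..u} (\<lambda>s. \<phi> (\<omega> * s) * g s)"

lemma partial_transform_0 [simp]: "partial_transform \<phi> g \<omega> 0 = 0"
  by (simp add: partial_transform_def)

lemma partial_transform_deriv:
  assumes \<phi>: "continuous_on UNIV \<phi>" and g: "continuous_on {0..} g" and u: "u \<in> {0..T}"
  shows "((\<lambda>u. partial_transform \<phi> g \<omega> u) has_real_derivative \<phi> (\<omega> * u) * g u) (at u within {0..T})"
  unfolding partial_transform_def
  by (rule integral_has_real_derivative[OF _ u])
    (auto intro!: continuous_intros continuous_on_compose2[OF \<phi>] continuous_on_subset[OF g])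

lemma partial_transform_continuous:
  assumes \<phi>: "continuous_on UNIV \<phi>" and g: "continuous_on {0..} g"
  shows "continuous_on UNIV (\<lambda>\<omega>. partial_transform \<phi> g \<omega> u)"
proof -
  have "continuous_on (UNIV \<times> cbox 0 u) (\<lambda>z. \<phi> (fst z * snd z) * g (snd z))"
    by (intro continuous_on_mult continuous_on_compose2[OF \<phi>] continuous_on_compose2[OF g])
      (auto intro!: continuous_intros)
  then have "continuous_on (UNIV \<times> cbox 0 u) (\<lambda>(\<omega>, s). \<phi> (\<omega> * s) * g s)"
    by (simp add: case_prod_beta)
  then show ?thesis
    unfolding partial_transform_def using integral_continuous_on_param[of UNIV 0 u] by simp
qed

lemma partial_transform_bound:
  assumes \<phi>: "continuous_on UNIV \<phi>" "\<And>x. \<bar>\<phi> x\<bar> \<le> 1"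
    and g: "continuous_on {0..} g" "\<And>s. s \<in> {0..T} \<Longrightarrow> \<bar>g s\<bar> \<le> B"
    and w: "w \<in> {0..T}"
  shows "\<bar>partial_transform \<phi> g \<omega> w\<bar> \<le> B * T"
proof -
  have "\<bar>\<phi> (\<omega> * s) * g s\<bar> \<le> 1 * B" if "s \<in> {0..T}" for s
    unfolding abs_mult using \<phi>(2) g(2)[OF that] by (intro mult_mono) auto
  then have "norm (partial_transform \<phi> g \<omega> w - partial_transform \<phi> g \<omega> 0) \<le> B * norm (w - 0)"
    by (intro field_differentiable_bound[where S="{0..T}" and f'="\<lambda>s. \<phi> (\<omega> * s) * g s"])
      (use partial_transform_deriv[OF \<phi>(1) g(1)] w in auto)
  moreover have "B \<ge> 0" using g(2)[of 0] w by auto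
  ultimately show ?thesis
    using w mult_left_mono[of w T B] by auto
qed

lemma partial_transforms_bounded:
  assumes g: "continuous_on {0..} g"
  obtains B where "\<And>s. s \<in> {0..T} \<Longrightarrow> \<bar>g s\<bar> \<le> B"
    and "\<And>\<omega> y. y \<in> {0..T} \<Longrightarrow> \<bar>partial_transform cos g \<omega> y\<bar> \<le> B * T"
    and "\<And>\<omega> y. y \<in> {0..T} \<Longrightarrow> \<bar>partial_transform sin g \<omega> y\<bar> \<le> B * T"
proof -
  obtain B where B: "\<And>s. s \<in> {0..T} \<Longrightarrow> \<bar>g s\<bar> \<le> B"
    using continuous_on_compact_bound[OF compact_Icc continuous_on_subset[OF g], of 0 T] by auto
  show ?thesis
    using partial_transform_bound[OF continuous_on_cos[OF continuous_on_id] _ g B]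
      partial_transform_bound[OF continuous_on_sin[OF continuous_on_id] _ g B]
    by (intro that[of B] B) auto
qed

lemma trig_transforms_measurable:
  assumes \<sigma>: "spectral_measure \<sigma> M" and g: "continuous_on {0..} g"
  shows "(\<lambda>\<omega>. cos (\<omega> * x)) \<in> borel_measurable \<sigma>" "(\<lambda>\<omega>. sin (\<omega> * x)) \<in> borel_measurable \<sigma>"
    and "(\<lambda>\<omega>. partial_transform cos g \<omega> x) \<in> borel_measurable \<sigma>"
    and "(\<lambda>\<omega>. partial_transform sin g \<omega> x) \<in> borel_measurable \<sigma>"
  using partial_transform_continuous[OF continuous_on_cos[OF continuous_on_id] g]
    partial_transform_continuous[OF continuous_on_sin[OF continuous_on_id] g]
  by (intro spectral_measure_continuous_measurable[OF \<sigma>] continuous_intros; simp)+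

(* Spectral form of the memory term: as M(u - s) is the sigma-integral of
   cos(omega u) cos(omega s) + sin(omega u) sin(omega s), the convolution equals an
   integral of the truncated transforms.  Both sides vanish at u = 0 and have the same
   derivative in the upper limit of the convolution. *)
lemma convolution_spectral:
  assumes \<sigma>: "spectral_measure \<sigma> M" and g: "continuous_on {0..} g" and u: "u \<ge> 0"
  shows "integral {0..u} (\<lambda>s. M (u - s) * g s) =
    (\<integral>\<omega>. cos (\<omega> * u) * partial_transform cos g \<omega> u + sin (\<omega> * u) * partial_transform sin g \<omega> u \<partial>\<sigma>)"
proof -
  interpret \<sigma>: finite_measure \<sigma> using \<sigma> by (simp add: spectral_measure_def)
  let ?C = "partial_transform cos g" and ?D = "partial_transform sin g"
  obtain B where B: "\<And>s. s \<in> {0..u} \<Longrightarrow> \<bar>g s\<bar> \<le> B"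
    and bC: "\<And>\<omega> w. w \<in> {0..u} \<Longrightarrow> \<bar>?C \<omega> w\<bar> \<le> B * u"
      "\<And>\<omega> w. w \<in> {0..u} \<Longrightarrow> \<bar>?D \<omega> w\<bar> \<le> B * u"
    using partial_transforms_bounded[OF g, of u] by blast
  note meas = trig_transforms_measurable[OF \<sigma> g]
  define G where "G = (\<lambda>w. integral {0..w} (\<lambda>s. M (u - s) * g s))"
  define H where "H = (\<lambda>w. \<integral>\<omega>. cos (\<omega> * u) * ?C \<omega> w + sin (\<omega> * u) * ?D \<omega> w \<partial>\<sigma>)"
  have dG: "(G has_real_derivative M (u - w) * g w) (at w within {0..u})" if "w \<in> {0..u}" for w
  proof -
    have "continuous_on {0..u} (\<lambda>s. M (u - s))"
      by (rule continuous_on_compose2[OF spectral_measure_continuous[OF \<sigma>]])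
        (auto intro: continuous_intros)
    then show ?thesis
      unfolding G_def using continuous_on_subset[OF g, of "{0..u}"]
      by (intro integral_has_real_derivative[OF _ that] continuous_on_mult) auto
  qed
  have dH: "(H has_real_derivative M (u - w) * g w) (at w within {0..u})" if w: "w \<in> {0..u}" for w
  proof -
    let ?h' = "\<lambda>y \<omega>. cos (\<omega> * u) * (cos (\<omega> * y) * g y) + sin (\<omega> * u) * (sin (\<omega> * y) * g y)"
    have "?h' w \<omega> = cos (\<omega> * (u - w)) * g w" for \<omega>
      by (simp add: cos_diff right_diff_distrib algebra_simps)
    then have "M (u - w) * g w = (\<integral>\<omega>. ?h' w \<omega> \<partial>\<sigma>)"
      using \<sigma> by (simp add: spectral_measure_def)
    moreover have "(H has_real_derivative (\<integral>\<omega>. ?h' w \<omega> \<partial>\<sigma>)) (at w within {0..u})"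
      unfolding H_def
    proof (rule has_real_derivative_integral_param[OF \<sigma>.finite_measure_axioms _ _ _ _ w, where B="2 * B"])
      show "?h' w \<in> borel_measurable \<sigma>"
        by (intro spectral_measure_continuous_measurable[OF \<sigma>] continuous_intros)
      fix y \<omega> assume y: "y \<in> {0..u}"
      show "integrable \<sigma> (\<lambda>\<omega>. cos (\<omega> * u) * ?C \<omega> y + sin (\<omega> * u) * ?D \<omega> y)"
      proof (rule \<sigma>.integrable_const_bound[where B="2 * (B * u)"])
        have "\<bar>cos (\<omega> * u) * ?C \<omega> y\<bar> \<le> B * u" "\<bar>sin (\<omega> * u) * ?D \<omega> y\<bar> \<le> B * u" for \<omega>
          using bC[OF y] by (simp_all add: abs_le_one_mult)
        then show "AE \<omega> in \<sigma>. norm (cos (\<omega> * u) * ?C \<omega> y + sin (\<omega> * u) * ?D \<omega> y) \<le> 2 * (B * u)"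
          by (intro AE_I2) (smt (verit) real_norm_def)
        show "(\<lambda>\<omega>. cos (\<omega> * u) * ?C \<omega> y + sin (\<omega> * u) * ?D \<omega> y) \<in> borel_measurable \<sigma>"
          by (intro borel_measurable_add borel_measurable_times meas)
      qed
      show "((\<lambda>y. cos (\<omega> * u) * ?C \<omega> y + sin (\<omega> * u) * ?D \<omega> y) has_real_derivative ?h' y \<omega>)
          (at y within {0..u})"
        using y g by (intro DERIV_add DERIV_cmult partial_transform_deriv) (auto intro: continuous_intros)
      have "\<bar>cos (\<omega> * u) * (cos (\<omega> * y) * g y)\<bar> \<le> B" "\<bar>sin (\<omega> * u) * (sin (\<omega> * y) * g y)\<bar> \<le> B"
        using B[OF y] by (simp_all add: abs_le_one_mult)
      then show "\<bar>?h' y \<omega>\<bar> \<le> 2 * B" by (smt (verit))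
    qed
    ultimately show ?thesis by simp
  qed
  obtain c where "\<forall>x\<in>{0..u}. G x - H x = c"
    using has_field_derivative_zero_constant[of "{0..u}" "\<lambda>x. G x - H x"]
      DERIV_diff[OF dG dH] by force
  moreover have "G 0 - H 0 = 0" by (simp add: G_def H_def)
  ultimately have "G u = H u" using u by force
  then show ?thesis by (simp add: G_def H_def)
qed

definition memory_energy :: "real measure \<Rightarrow> (real \<Rightarrow> real) \<Rightarrow> real \<Rightarrow> real" where
  "memory_energy \<sigma> g w =
     (\<integral>\<omega>. ((partial_transform cos g \<omega> w)\<^sup>2 + (partial_transform sin g \<omega> w)\<^sup>2) / 2 \<partial>\<sigma>)"

lemma memory_energy_nonneg: "memory_energy \<sigma> g w \<ge> 0"
  unfolding memory_energy_def by (rule Bochner_Integration.integral_nonneg) auto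

lemma memory_energy_0 [simp]: "memory_energy \<sigma> g 0 = 0"
  by (simp add: memory_energy_def)

(* The memory energy is a primitive of g(w) times the memory convolution at time w:
   differentiate under the integral sign and apply convolution_spectral. *)
lemma memory_energy_deriv:
  assumes \<sigma>: "spectral_measure \<sigma> M" and g: "continuous_on {0..} g" and w: "w \<in> {0..T}"
  shows "(memory_energy \<sigma> g has_real_derivative g w * integral {0..w} (\<lambda>s. M (w - s) * g s))
           (at w within {0..T})"
proof -
  interpret \<sigma>: finite_measure \<sigma> using \<sigma> by (simp add: spectral_measure_def)
  let ?C = "partial_transform cos g" and ?D = "partial_transform sin g"
  let ?e' = "\<lambda>y \<omega>. ?C \<omega> y * (cos (\<omega> * y) * g y) + ?D \<omega> y * (sin (\<omega> * y) * g y)"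
  note meas = trig_transforms_measurable[OF \<sigma> g]
  obtain B where B: "\<And>s. s \<in> {0..T} \<Longrightarrow> \<bar>g s\<bar> \<le> B"
    and bC: "\<And>\<omega> y. y \<in> {0..T} \<Longrightarrow> \<bar>?C \<omega> y\<bar> \<le> B * T"
      "\<And>\<omega> y. y \<in> {0..T} \<Longrightarrow> \<bar>?D \<omega> y\<bar> \<le> B * T"
    using partial_transforms_bounded[OF g, of T] by blast
  have "(memory_energy \<sigma> g has_real_derivative (\<integral>\<omega>. ?e' w \<omega> \<partial>\<sigma>)) (at w within {0..T})"
    unfolding memory_energy_def
  proof (rule has_real_derivative_integral_param[OF \<sigma>.finite_measure_axioms _ _ _ _ w,
        where B="2 * (B * T) * B"])
    show "?e' w \<in> borel_measurable \<sigma>"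
      by (intro borel_measurable_add borel_measurable_times meas borel_measurable_const)
    fix y \<omega> assume y: "y \<in> {0..T}"
    show "integrable \<sigma> (\<lambda>\<omega>. ((?C \<omega> y)\<^sup>2 + (?D \<omega> y)\<^sup>2) / 2)"
    proof (rule \<sigma>.integrable_const_bound[where B="(B * T)\<^sup>2"])
      show "AE \<omega> in \<sigma>. norm (((?C \<omega> y)\<^sup>2 + (?D \<omega> y)\<^sup>2) / 2) \<le> (B * T)\<^sup>2"
      proof (rule AE_I2)
        fix \<omega>
        have "(?C \<omega> y)\<^sup>2 \<le> (B * T)\<^sup>2" "(?D \<omega> y)\<^sup>2 \<le> (B * T)\<^sup>2"
          using power_mono[OF bC(1)[OF y, of \<omega>] abs_ge_zero, of 2]
            power_mono[OF bC(2)[OF y, of \<omega>] abs_ge_zero, of 2] by simp_all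
        then show "norm (((?C \<omega> y)\<^sup>2 + (?D \<omega> y)\<^sup>2) / 2) \<le> (B * T)\<^sup>2" by simp
      qed
    qed (use meas in simp)
    have "((\<lambda>y. ((?C \<omega> y)\<^sup>2 + (?D \<omega> y)\<^sup>2) / 2) has_real_derivative
        (of_nat 2 * (cos (\<omega> * y) * g y * ?C \<omega> y ^ (2 - Suc 0))
          + of_nat 2 * (sin (\<omega> * y) * g y * ?D \<omega> y ^ (2 - Suc 0))) / 2)
        (at y within {0..T})"
      using partial_transform_deriv[OF continuous_on_cos[OF continuous_on_id] g y]
        partial_transform_deriv[OF continuous_on_sin[OF continuous_on_id] g y]
      by (intro DERIV_cdivide DERIV_add DERIV_power)
    then show "((\<lambda>y. ((?C \<omega> y)\<^sup>2 + (?D \<omega> y)\<^sup>2) / 2) has_real_derivative ?e' y \<omega>) (at y within {0..T})"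
      by (rule DERIV_cong) (simp add: algebra_simps)
    have trig_g: "\<bar>cos (\<omega> * y) * g y\<bar> \<le> B" "\<bar>sin (\<omega> * y) * g y\<bar> \<le> B"
      using B[OF y] by (simp_all add: abs_le_one_mult)
    have "0 \<le> B * T" using bC(1)[OF y, of \<omega>] by linarith
    then have "\<bar>?C \<omega> y\<bar> * \<bar>cos (\<omega> * y) * g y\<bar> \<le> (B * T) * B"
        "\<bar>?D \<omega> y\<bar> * \<bar>sin (\<omega> * y) * g y\<bar> \<le> (B * T) * B"
      using mult_mono[OF bC(1)[OF y, of \<omega>] trig_g(1)] mult_mono[OF bC(2)[OF y, of \<omega>] trig_g(2)] by simp_all
    then show "\<bar>?e' y \<omega>\<bar> \<le> 2 * (B * T) * B"
      unfolding abs_mult[symmetric]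
      using abs_triangle_ineq[of "?C \<omega> y * (cos (\<omega> * y) * g y)" "?D \<omega> y * (sin (\<omega> * y) * g y)"]
      by linarith
  qed
  moreover have "(\<integral>\<omega>. ?e' w \<omega> \<partial>\<sigma>) = g w * integral {0..w} (\<lambda>s. M (w - s) * g s)"
  proof -
    have "?e' w \<omega> = g w * (cos (\<omega> * w) * ?C \<omega> w + sin (\<omega> * w) * ?D \<omega> w)" for \<omega>
      by (simp add: algebra_simps)
    then show ?thesis
      using convolution_spectral[OF \<sigma> g, of w] w by simp
  qed
  ultimately show ?thesis by simp
qed

lemma derivative_on_halfline_imp_continuous:
  assumes "\<And>t. t \<ge> 0 \<Longrightarrow> (f has_real_derivative f' t) (at t within {0..})"
  shows "continuous_on {0..} f"
  using assms DERIV_continuous continuous_on_eq_continuous_within by (metis atLeast_iff)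

(* Energy balance of the mode-coupling equation: multiplying the equation by S' shows that
   S'^2/(2J) + S^2/(2 S0) + nu * (integral of S'^2) + memory energy is constant, equal to
   its initial value S0/2.  Dropping the nonnegative terms bounds the dissipated energy. *)
lemma dissipation_bound:
  fixes S S' S'' M :: "real \<Rightarrow> real"
  assumes S0_pos: "S0 > 0" and J_pos: "J > 0"
    and S_deriv: "\<And>t. t \<ge> 0 \<Longrightarrow> (S has_real_derivative S' t) (at t within {0..})"
    and S'_deriv: "\<And>t. t \<ge> 0 \<Longrightarrow> (S' has_real_derivative S'' t) (at t within {0..})"
    and \<sigma>: "spectral_measure \<sigma> M"
    and MCT: "\<And>t. t \<ge> 0 \<Longrightarrow>
        S'' t / J + \<nu> * S' t + S t / S0 + integral {0..t} (\<lambda>s. M (t - s) * S' s) = 0"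
    and S_init: "S 0 = S0" and S'_init: "S' 0 = 0"
    and T: "T \<ge> 0"
  shows "\<nu> * integral {0..T} (\<lambda>s. (S' s)\<^sup>2) \<le> S0 / 2"
proof -
  have S'_cont: "continuous_on {0..} S'"
    using derivative_on_halfline_imp_continuous[OF S'_deriv] .
  define F where "F = (\<lambda>w. integral {0..w} (\<lambda>s. (S' s)\<^sup>2))"
  define E where "E = (\<lambda>w. (S' w)\<^sup>2 / (2 * J) + (S w)\<^sup>2 / (2 * S0) + \<nu> * F w + memory_energy \<sigma> S' w)"
  have E_deriv: "(E has_real_derivative 0) (at w within {0..T})" if w: "w \<in> {0..T}" for w
  proof -
    have dS: "(S has_real_derivative S' w) (at w within {0..T})"
      and dS': "(S' has_real_derivative S'' w) (at w within {0..T})"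
      using has_field_derivative_subset[OF S_deriv] has_field_derivative_subset[OF S'_deriv] w by auto
    have dF: "(F has_real_derivative (S' w)\<^sup>2) (at w within {0..T})"
      unfolding F_def using continuous_on_subset[OF S'_cont, of "{0..T}"]
      by (intro integral_has_real_derivative[OF _ w] continuous_intros) auto
    have sq: "((\<lambda>z. (f z)\<^sup>2) has_real_derivative 2 * f w * f') (at w within {0..T})"
      if "(f has_real_derivative f') (at w within {0..T})" for f f'
      using DERIV_power[OF that, of 2] by (simp add: algebra_simps)
    have "(E has_real_derivative 2 * S' w * S'' w / (2 * J) + 2 * S w * S' w / (2 * S0)
        + \<nu> * (S' w)\<^sup>2 + S' w * integral {0..w} (\<lambda>s. M (w - s) * S' s)) (at w within {0..T})"
      unfolding E_def
      by (intro DERIV_add DERIV_cdivide DERIV_cmult sq dS dS' dF memory_energy_deriv[OF \<sigma> S'_cont w])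
    moreover have "2 * S' w * S'' w / (2 * J) + 2 * S w * S' w / (2 * S0)
        + \<nu> * (S' w)\<^sup>2 + S' w * integral {0..w} (\<lambda>s. M (w - s) * S' s) =
        S' w * (S'' w / J + \<nu> * S' w + S w / S0 + integral {0..w} (\<lambda>s. M (w - s) * S' s))"
      using J_pos S0_pos by (simp add: field_simps power2_eq_square)
    ultimately have "(E has_real_derivative
        S' w * (S'' w / J + \<nu> * S' w + S w / S0 + integral {0..w} (\<lambda>s. M (w - s) * S' s)))
        (at w within {0..T})" by simp
    then show ?thesis using MCT[of w] w by simp
  qed
  obtain c where "\<forall>x\<in>{0..T}. E x = c"
    using has_field_derivative_zero_constant[of "{0..T}" E] E_deriv by auto
  moreover have "E 0 = S0 / 2"
    using S_init S'_init S0_pos by (simp add: E_def F_def power2_eq_square)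
  ultimately have "E T = S0 / 2" using T by force
  moreover have "(S' T)\<^sup>2 / (2 * J) \<ge> 0" "(S T)\<^sup>2 / (2 * S0) \<ge> 0"
    using J_pos S0_pos by auto
  ultimately show ?thesis
    using memory_energy_nonneg[of \<sigma> S' T] unfolding E_def F_def by linarith
qed

definition slowly_oscillating :: "(real \<Rightarrow> real) \<Rightarrow> bool" where
  "slowly_oscillating f \<longleftrightarrow>
     (\<forall>\<epsilon>>0. \<forall>h>0. \<exists>N. \<forall>t\<ge>N. \<forall>u\<in>{t..t+h}. \<bar>f u - f t\<bar> \<le> \<epsilon>)"

(* If F' = S'^2 then |S u - S t| <= a (u - t) + (F u - F t) / (4 a): the function
   a (z - t) + F z / (4 a) - d (S z - S t), d = 1 or -1, has derivative
   (S' - 2 d a)^2 / (4 a) >= 0. *)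
lemma oscillation_by_dissipation:
  fixes S S' F :: "real \<Rightarrow> real"
  assumes S_deriv: "\<And>z. z \<in> {t..u} \<Longrightarrow> (S has_real_derivative S' z) (at z within {t..u})"
    and F_deriv: "\<And>z. z \<in> {t..u} \<Longrightarrow> (F has_real_derivative (S' z)\<^sup>2) (at z within {t..u})"
    and tu: "t \<le> u" and a: "a > 0"
  shows "\<bar>S u - S t\<bar> \<le> a * (u - t) + (F u - F t) / (4 * a)"
proof -
  have "\<delta> * (S u - S t) \<le> a * (u - t) + (F u - F t) / (4 * a)" if sgn: "\<delta> \<in> {1, -1}" for \<delta> :: real
  proof -
    let ?G = "\<lambda>z. a * (z - t) + F z / (4 * a) - \<delta> * (S z - S t)"
    have "?G t \<le> ?G u"
    proof (rule has_real_derivative_nonneg_imp_le[OF tu])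
      show "(?G has_real_derivative a + (S' z)\<^sup>2 / (4 * a) - \<delta> * S' z) (at z within {t..u})"
        if "z \<in> {t..u}" for z
        using that a by (auto intro!: derivative_eq_intros S_deriv F_deriv)
      have "a + x\<^sup>2 / (4 * a) - \<delta> * x = (x - 2 * \<delta> * a)\<^sup>2 / (4 * a)" for x
        using a sgn by (auto simp: field_simps power2_eq_square)
      then show "a + (S' z)\<^sup>2 / (4 * a) - \<delta> * S' z \<ge> 0" for z
        using a by simp
    qed
    then show ?thesis by (simp add: diff_divide_distrib)
  qed
  from this[of 1] this[of "-1"] show ?thesis by (simp add: abs_le_iff)
qed

(* Finite total dissipation makes the increments of F over late windows small, and
   oscillation_by_dissipation with a = epsilon / (2 h) turns this into slow oscillation. *)
lemma finite_dissipation_imp_slowly_oscillating: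
  fixes S S' :: "real \<Rightarrow> real"
  assumes S_deriv: "\<And>t. t \<ge> 0 \<Longrightarrow> (S has_real_derivative S' t) (at t within {0..})"
    and S'_cont: "continuous_on {0..} S'"
    and bounded: "\<And>T. T \<ge> 0 \<Longrightarrow> integral {0..T} (\<lambda>s. (S' s)\<^sup>2) \<le> K"
  shows "slowly_oscillating S"
  unfolding slowly_oscillating_def
proof (intro allI impI)
  fix \<epsilon> h :: real assume \<epsilon>: "\<epsilon> > 0" and h: "h > 0"
  define F where "F = (\<lambda>w. integral {0..w} (\<lambda>s. (S' s)\<^sup>2))"
  have F_deriv: "(F has_real_derivative (S' z)\<^sup>2) (at z within {t..u})"
    if "0 \<le> t" "z \<in> {t..u}" for t u z
    unfolding F_def using that continuous_on_subset[OF S'_cont, of "{0..u}"]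
    by (intro has_field_derivative_subset[OF integral_has_real_derivative[of 0 u]] continuous_intros)
      auto
  have F_mono: "F t \<le> F u" if "0 \<le> t" "t \<le> u" for t u
    using that by (intro has_real_derivative_nonneg_imp_le[OF _ F_deriv]) auto
  define L where "L = (SUP w\<in>{0..}. F w)"
  have F_le_L: "F w \<le> L" if "w \<ge> 0" for w
    unfolding L_def using that bounded by (intro cSUP_upper bdd_aboveI2) (auto simp: F_def)
  define a where "a = \<epsilon> / (2 * h)"
  have a: "a > 0" "a * h = \<epsilon> / 2" using \<epsilon> h by (simp_all add: a_def)
  have "bdd_above (F ` {0..})"
    using bounded by (intro bdd_aboveI2) (auto simp: F_def)
  then obtain N where N: "N \<ge> 0" "L - a * \<epsilon> < F N"
    using less_cSUP_iff[of "{0..}" F "L - a * \<epsilon>"] a(1) \<epsilon> by (auto simp: L_def)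
  show "\<exists>N. \<forall>t\<ge>N. \<forall>u\<in>{t..t + h}. \<bar>S u - S t\<bar> \<le> \<epsilon>"
  proof (intro exI[of _ N] allI impI ballI)
    fix t u assume t: "N \<le> t" and u: "u \<in> {t..t + h}"
    have "\<bar>S u - S t\<bar> \<le> a * (u - t) + (F u - F t) / (4 * a)"
      using N t u a
      by (intro oscillation_by_dissipation[of t u S S'] F_deriv has_field_derivative_subset[OF S_deriv]) auto
    also have "\<dots> \<le> a * h + (a * \<epsilon>) / (4 * a)"
      using F_le_L[of u] F_mono[of N t] N t u a
      by (intro add_mono mult_left_mono divide_right_mono) auto
    also have "\<dots> \<le> \<epsilon>" using a \<epsilon> by simp
    finally show "\<bar>S u - S t\<bar> \<le> \<epsilon>" .
  qed
qed

definition cos_primitive :: "real \<Rightarrow> real \<Rightarrow> real" where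
  "cos_primitive \<omega> u = (if \<omega> = 0 then u else sin (\<omega> * u) / \<omega>)"

lemma cos_primitive_deriv:
  "((\<lambda>u. cos_primitive \<omega> u) has_real_derivative cos (\<omega> * u)) (at u within X)"
proof (cases "\<omega> = 0")
  case False
  then have "((\<lambda>u. sin (\<omega> * u) / \<omega>) has_real_derivative cos (\<omega> * u)) (at u within X)"
    by (auto intro!: derivative_eq_intros)
  then show ?thesis using False by (simp add: cos_primitive_def)
qed (simp add: cos_primitive_def)

lemma cos_primitive_lipschitz: "\<bar>cos_primitive \<omega> x - cos_primitive \<omega> y\<bar> \<le> \<bar>x - y\<bar>"
  using field_differentiable_bound[of UNIV "\<lambda>u. cos_primitive \<omega> u" "\<lambda>u. cos (\<omega> * u)" 1 x y]
    cos_primitive_deriv by auto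

lemma cos_primitive_bounded_variation:
  assumes "\<omega> \<noteq> 0"
  shows "\<bar>cos_primitive \<omega> x - cos_primitive \<omega> y\<bar> \<le> 2 / \<bar>\<omega>\<bar>"
proof -
  have "\<bar>sin (\<omega> * x) - sin (\<omega> * y)\<bar> \<le> 2"
    using sin_le_one[of "\<omega> * x"] sin_le_one[of "\<omega> * y"]
      sin_ge_minus_one[of "\<omega> * x"] sin_ge_minus_one[of "\<omega> * y"] by linarith
  then have "\<bar>sin (\<omega> * x) - sin (\<omega> * y)\<bar> / \<bar>\<omega>\<bar> \<le> 2 / \<bar>\<omega>\<bar>"
    by (simp add: divide_right_mono)
  then show ?thesis
    using assms by (simp add: cos_primitive_def diff_divide_distrib[symmetric] abs_divide)
qed

lemma cos_primitive_integrable: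
  assumes "spectral_measure \<rho> f"
  shows "integrable \<rho> (\<lambda>\<omega>. cos_primitive \<omega> u)"
proof (rule finite_measure.integrable_const_bound[where B="\<bar>u\<bar>"])
  show "finite_measure \<rho>" using assms by (simp add: spectral_measure_def)
  show "(\<lambda>\<omega>. cos_primitive \<omega> u) \<in> borel_measurable \<rho>"
    unfolding cos_primitive_def by (intro spectral_measure_borel_measurable[OF assms]) measurable
  show "AE \<omega> in \<rho>. norm (cos_primitive \<omega> u) \<le> \<bar>u\<bar>"
  proof (rule AE_I2)
    fix \<omega>
    have "cos_primitive \<omega> 0 = 0" by (simp add: cos_primitive_def)
    then show "norm (cos_primitive \<omega> u) \<le> \<bar>u\<bar>"
      using cos_primitive_lipschitz[of \<omega> u 0] by simp
  qed
qed

lemma spectral_primitive_deriv: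
  assumes \<rho>: "spectral_measure \<rho> f" and u: "u \<in> {a..b}"
  shows "((\<lambda>u. \<integral>\<omega>. cos_primitive \<omega> u \<partial>\<rho>) has_real_derivative f u) (at u within {a..b})"
proof -
  have "((\<lambda>u. \<integral>\<omega>. cos_primitive \<omega> u \<partial>\<rho>) has_real_derivative (\<integral>\<omega>. cos (\<omega> * u) \<partial>\<rho>))
      (at u within {a..b})"
    using \<rho> by (intro has_real_derivative_integral_param[where B=1] cos_primitive_integrable
        cos_primitive_deriv spectral_measure_continuous_measurable u continuous_intros)
      (auto simp: spectral_measure_def)
  then show ?thesis using \<rho> by (simp add: spectral_measure_def)
qed

definition low_frequencies :: "nat \<Rightarrow> real set" where
  "low_frequencies n = {\<omega>. 0 < \<bar>\<omega>\<bar> \<and> \<bar>\<omega>\<bar> < 1 / real (Suc n)}"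

lemma low_frequencies_measure_vanishes:
  assumes \<rho>: "spectral_measure \<rho> f"
  shows "(\<lambda>n. measure \<rho> (low_frequencies n)) \<longlonglongrightarrow> 0"
proof -
  interpret finite_measure \<rho> using \<rho> by (simp add: spectral_measure_def)
  have sets: "range low_frequencies \<subseteq> sets \<rho>"
    using \<rho> unfolding spectral_measure_def low_frequencies_def by auto
  have "decseq low_frequencies"
  proof (intro decseq_SucI subsetI)
    fix n x assume "x \<in> low_frequencies (Suc n)"
    moreover have "1 / real (Suc (Suc n)) \<le> 1 / real (Suc n)" by (simp add: frac_le)
    ultimately show "x \<in> low_frequencies n" by (auto simp: low_frequencies_def)
  qed
  moreover have "(\<Inter>n. low_frequencies n) = {}"
  proof (intro equalityI subsetI)
    fix x assume x: "x \<in> (\<Inter>n. low_frequencies n)"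
    then have "0 < \<bar>x\<bar>" by (auto simp: low_frequencies_def)
    then obtain n where "inverse (real (Suc n)) < \<bar>x\<bar>" using reals_Archimedean by blast
    then have "x \<notin> low_frequencies n" by (auto simp: low_frequencies_def field_simps)
    then show "x \<in> {}" using x by auto
  qed auto
  ultimately show ?thesis
    using finite_Lim_measure_decseq[OF sets] by simp
qed

(* Integrating f over [t, t + h] leaves from the frequencies of size at least 1/(n+1) an
   error independent of h, while the atom at 0 contributes exactly h * rho {0}. *)
lemma spectral_primitive_increment:
  assumes \<rho>: "spectral_measure \<rho> f" and h: "h > 0"
  shows "\<bar>(\<integral>\<omega>. cos_primitive \<omega> (t + h) \<partial>\<rho>) - (\<integral>\<omega>. cos_primitive \<omega> t \<partial>\<rho>) - h * measure \<rho> {0}\<bar>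
           \<le> h * measure \<rho> (low_frequencies n) + 2 * real (Suc n) * measure \<rho> UNIV"
proof -
  interpret finite_measure \<rho> using \<rho> by (simp add: spectral_measure_def)
  have space: "space \<rho> = UNIV" by (rule spectral_measure_space[OF \<rho>])
  have ind_int: "integrable \<rho> (indicator A :: real \<Rightarrow> real)" if "A \<in> sets borel" for A
    using that \<rho> by (intro integrable_const_bound[where B=1]) (auto simp: spectral_measure_def)
  let ?\<delta> = "\<lambda>\<omega>. cos_primitive \<omega> (t + h) - cos_primitive \<omega> t - h * indicator {0} \<omega>"
  let ?bound = "\<lambda>\<omega>. h * indicator (low_frequencies n) \<omega> + 2 * real (Suc n)"
  have "(\<integral>\<omega>. cos_primitive \<omega> (t + h) \<partial>\<rho>) - (\<integral>\<omega>. cos_primitive \<omega> t \<partial>\<rho>) - h * measure \<rho> {0}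
      = (\<integral>\<omega>. ?\<delta> \<omega> \<partial>\<rho>)"
    using cos_primitive_integrable[OF \<rho>] ind_int[of "{0}"] space by (simp add: integral_diff)
  also have "\<bar>\<dots>\<bar> \<le> (\<integral>\<omega>. ?bound \<omega> \<partial>\<rho>)"
  proof (rule integral_abs_bound_integral)
    show "integrable \<rho> ?\<delta>"
      using cos_primitive_integrable[OF \<rho>] ind_int[of "{0}"] by auto
    show "integrable \<rho> ?bound"
      using ind_int[of "low_frequencies n"] by (auto simp: low_frequencies_def)
    fix \<omega> :: real
    consider "\<omega> = 0" | "\<omega> \<in> low_frequencies n" | "\<omega> \<noteq> 0" "\<omega> \<notin> low_frequencies n" by blast
    then show "\<bar>?\<delta> \<omega>\<bar> \<le> ?bound \<omega>"
    proof cases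
      case 1
      then show ?thesis using h by (simp add: cos_primitive_def low_frequencies_def)
    next
      case 2
      then show ?thesis
        using cos_primitive_lipschitz[of \<omega> "t + h" t] h by (auto simp: low_frequencies_def)
    next
      case 3
      then have "1 / \<bar>\<omega>\<bar> \<le> real (Suc n)"
        by (auto simp: low_frequencies_def field_simps not_less)
      then show ?thesis
        using 3 cos_primitive_bounded_variation[of \<omega> "t + h" t] by simp
    qed
  qed
  also have "(\<integral>\<omega>. ?bound \<omega> \<partial>\<rho>) = h * measure \<rho> (low_frequencies n) + 2 * real (Suc n) * measure \<rho> UNIV"
    using ind_int[of "low_frequencies n"] space by (auto simp: low_frequencies_def)
  finally show ?thesis .
qed

(* Its averages over long windows are close to
   rho {0}, and slow oscillation makes f(t) close to its average over [t, t + h]. *)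
theorem slowly_oscillating_spectral_limit:
  assumes \<rho>: "spectral_measure \<rho> f" and slow: "slowly_oscillating f"
  shows "(f \<longlongrightarrow> measure \<rho> {0}) at_top"
proof -
  let ?\<Psi> = "\<lambda>u. \<integral>\<omega>. cos_primitive \<omega> u \<partial>\<rho>"
  let ?c = "measure \<rho> {0}"
  have close: "\<exists>N. \<forall>t\<ge>N. \<bar>f t - ?c\<bar> \<le> \<epsilon>" if \<epsilon>: "\<epsilon> > 0" for \<epsilon>
  proof -
    obtain n where n: "measure \<rho> (low_frequencies n) < \<epsilon> / 4"
      using order_tendstoD(2)[OF low_frequencies_measure_vanishes[OF \<rho>], of "\<epsilon> / 4"] \<epsilon>
      by (auto simp: eventually_sequentially)
    define h where "h = 8 * real (Suc n) * (measure \<rho> UNIV + 1) / \<epsilon>"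
    have h: "h > 0"
      using \<epsilon> by (simp add: h_def add_nonneg_pos)
    have "h * \<epsilon> / 4 = 2 * real (Suc n) * (measure \<rho> UNIV + 1)"
      using \<epsilon> by (simp add: h_def)
    then have far: "2 * real (Suc n) * measure \<rho> UNIV \<le> h * \<epsilon> / 4"
      by (simp add: algebra_simps)
    obtain N where N: "\<And>t u. t \<ge> N \<Longrightarrow> u \<in> {t..t + h} \<Longrightarrow> \<bar>f u - f t\<bar> \<le> \<epsilon> / 2"
      using slow h \<epsilon> unfolding slowly_oscillating_def by (meson half_gt_zero)
    show ?thesis
    proof (intro exI allI impI)
      fix t assume t: "N \<le> t"
      have "h * measure \<rho> (low_frequencies n) \<le> h * (\<epsilon> / 4)"
        using n h by (intro mult_left_mono) auto
      then have spectral: "\<bar>?\<Psi> (t + h) - ?\<Psi> t - h * ?c\<bar> \<le> h * \<epsilon> / 2"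
        using spectral_primitive_increment[OF \<rho> h, of t n] far by linarith
      have "norm ((?\<Psi> (t + h) - (t + h) * f t) - (?\<Psi> t - t * f t)) \<le> \<epsilon> / 2 * norm ((t + h) - t)"
      proof (rule field_differentiable_bound[where S="{t..t + h}" and f'="\<lambda>z. f z - f t"])
        show "((\<lambda>z. ?\<Psi> z - z * f t) has_field_derivative f z - f t) (at z within {t..t + h})"
          if "z \<in> {t..t + h}" for z
          using spectral_primitive_deriv[OF \<rho> that] by (auto intro!: derivative_eq_intros)
        show "norm (f z - f t) \<le> \<epsilon> / 2" if "z \<in> {t..t + h}" for z
          using N[OF t that] by simp
      qed (use h in auto)
      then have average: "\<bar>?\<Psi> (t + h) - ?\<Psi> t - h * f t\<bar> \<le> h * \<epsilon> / 2"
        using h by (simp add: algebra_simps)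
      have "\<bar>h * f t - h * ?c\<bar> \<le> h * \<epsilon>"
        using abs_triangle_ineq4[of "?\<Psi> (t + h) - ?\<Psi> t - h * ?c" "?\<Psi> (t + h) - ?\<Psi> t - h * f t"]
          spectral average by simp
      then have "h * \<bar>f t - ?c\<bar> \<le> h * \<epsilon>"
        using h by (simp add: abs_mult right_diff_distrib[symmetric])
      then show "\<bar>f t - ?c\<bar> \<le> \<epsilon>" using h by simp
    qed
  qed
  show ?thesis
  proof (rule tendstoI)
    fix e :: real assume "e > 0"
    then obtain N where "\<forall>t\<ge>N. \<bar>f t - ?c\<bar> \<le> e / 2" using close[of "e / 2"] by auto
    then show "eventually (\<lambda>t. dist (f t) ?c < e) at_top"
      unfolding eventually_at_top_linorder dist_real_def using \<open>e > 0\<close> by force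
  qed
qed

theorem mainTheorem4:
  fixes S0 \<nu> J :: real and v :: "nat \<Rightarrow> real"
    and S S' S'' M :: "real \<Rightarrow> real"
  assumes S0_pos: "S0 > 0" and nu_pos: "\<nu> > 0" and J_pos: "J > 0"
    and v_nonneg: "\<And>n. v n \<ge> 0"
    and v_summable: "summable (\<lambda>n. v (Suc n) * S0 ^ Suc n)"
    and S_corr: "eq_corr S"
    and S_deriv: "\<And>t. t \<ge> 0 \<Longrightarrow> (S has_real_derivative S' t) (at t within {0..})"
    and S'_deriv: "\<And>t. t \<ge> 0 \<Longrightarrow> (S' has_real_derivative S'' t) (at t within {0..})"
    and M_def: "\<And>t. M t = (\<Sum>n. v (Suc n) * S t ^ Suc n)"
    and M_corr: "eq_corr M"
    and MCT: "\<And>t. t \<ge> 0 \<Longrightarrow>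
        S'' t / J + \<nu> * S' t + S t / S0 + integral {0..t} (\<lambda>s. M (t - s) * S' s) = 0"
    and S_init: "S 0 = S0"
    and S'_init: "S' 0 = 0"
  shows "\<exists>L. (S \<longlongrightarrow> L) at_top"
proof -
  obtain \<rho> where \<rho>: "spectral_measure \<rho> S"
    using eq_corr_imp_spectral_measure[OF S_corr] .
  obtain \<sigma> where \<sigma>: "spectral_measure \<sigma> M"
    using eq_corr_imp_spectral_measure[OF M_corr] .
  have "integral {0..T} (\<lambda>s. (S' s)\<^sup>2) \<le> S0 / (2 * \<nu>)" if "T \<ge> 0" for T
    using dissipation_bound[OF S0_pos J_pos S_deriv S'_deriv \<sigma> MCT S_init S'_init that] nu_pos
    by (simp add: field_simps)
  then have "slowly_oscillating S"
    using finite_dissipation_imp_slowly_oscillating[OF S_deriv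
        derivative_on_halfline_imp_continuous[OF S'_deriv]] by blast
  then show ?thesis
    using slowly_oscillating_spectral_limit[OF \<rho>] by blast
qed

end
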